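(* Let $d\ge2$ be an integer, $B>1$ and $0<s<1$. Then $$\sup_{1\le\alpha_1\le\cdots\le\alpha_{d-1}\le B}\min\Big\{\alpha_1^{-s},\ \big(\alpha_1^{1-s}\alpha_2^{-s}\big)^{1/2},\ \dots,\ \big(\alpha_{k-1}^{1-s}\alpha_k^{-s}\big)^{1/k},\ \dots,\ \big(\alpha_{d-1}^{1-s}B^{-s}\big)^{1/d}\Big\}=B^{-g_d(s)},$$ where the terms in the minimum are $\alpha_1^{-s}$, the terms $(\alpha_{k-1}^{1-s}\alpha_k^{-s})^{1/k}$ for $2\le k\le d-1$, and $(\alpha_{d-1}^{1-s}B^{-s})^{1/d}$; moreover the supremum is attained at the point where all the terms in the minimum are equal.
   Context: Functions $g_n:[0,1]\to\mathbb R$: $g_1(s)=s$, $g_n(s)=\frac{s\,g_{n-1}(s)}{1-s+n\,g_{n-1}(s)}$ for $n\ge2$. *)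

theory Defs
  imports Complex_Main
begin

fun g :: "nat \<Rightarrow> real \<Rightarrow> real" where
  "g 0 s = 0"
| "g (Suc 0) s = s"
| "g (Suc (Suc n)) s = s * g (Suc n) s / (1 - s + real (Suc (Suc n)) * g (Suc n) s)"

definition admissible :: "nat \<Rightarrow> real \<Rightarrow> (nat \<Rightarrow> real) \<Rightarrow> bool" where
  "admissible d B \<alpha> \<longleftrightarrow>
     1 \<le> \<alpha> 1 \<and> (\<forall>k. 1 \<le> k \<and> k < d - 1 \<longrightarrow> \<alpha> k \<le> \<alpha> (Suc k)) \<and> \<alpha> (d - 1) \<le> B"

definition mterm :: "nat \<Rightarrow> real \<Rightarrow> real \<Rightarrow> (nat \<Rightarrow> real) \<Rightarrow> nat \<Rightarrow> real" where
  "mterm d B s \<alpha> k =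
     (if k = 1 then \<alpha> 1 powr (- s)
      else if k = d then (\<alpha> (d - 1) powr (1 - s) * B powr (- s)) powr (1 / real d)
      else (\<alpha> (k - 1) powr (1 - s) * \<alpha> k powr (- s)) powr (1 / real k))"

definition minval :: "nat \<Rightarrow> real \<Rightarrow> real \<Rightarrow> (nat \<Rightarrow> real) \<Rightarrow> real" where
  "minval d B s \<alpha> = Min ((\<lambda>k. mterm d B s \<alpha> k) ` {1..d})"

end

theory Submission
  imports Defs
begin

text \<open>In logarithmic coordinates \<open>y\<^sub>k = ln \<alpha>\<^sub>k\<close> (with \<open>\<alpha>\<^sub>d = B\<close>) every term of the minimum
  becomes a linear form in \<open>y\<close>, and the sequence \<open>1 / g\<^sub>k(s)\<close> is exactly the solution of the
  linear recursion making all these forms equal to \<open>-1\<close>. Shifting \<open>y\<close> by a multiple of this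
  solution reduces everything to one sign propagation: if all forms are nonnegative then
  \<open>y\<^sub>d \<le> 0\<close>. Hence a lower bound \<open>c\<close> on all logarithmic terms forces \<open>c \<le> -ln B \<cdot> g\<^sub>d(s)\<close>,
  with equality exactly at the point where all terms agree; that point is explicit,
  \<open>\<alpha>\<^sub>k = B\<^bsup>g\<^sub>d(s) / g\<^sub>k(s)\<^esup>\<close>.\<close>

fun ginv :: "nat \<Rightarrow> real \<Rightarrow> real" where
  "ginv 0 s = 0"
| "ginv (Suc k) s = ((1 - s) * ginv k s + real (Suc k)) / s"

lemma ginv_less_Suc:
  assumes "0 < s" "s < 1"
  shows "ginv k s < ginv (Suc k) s"
proof (induction k)
  case 0
  then show ?case using assms by simp
next
  case (Suc k)
  have "ginv (Suc (Suc k)) s - ginv (Suc k) s = ((1 - s) * (ginv (Suc k) s - ginv k s) + 1) / s"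
    using assms by (simp add: field_simps)
  also have "\<dots> > 0"
    using assms Suc by (intro divide_pos_pos add_nonneg_pos mult_nonneg_nonneg) auto
  finally show ?case by simp
qed

lemma incseq_ginv:
  assumes "0 < s" "s < 1"
  shows "incseq (\<lambda>k. ginv k s)"
  using ginv_less_Suc[OF assms] by (intro incseq_SucI) (simp add: less_imp_le)

lemma ginv_pos:
  assumes "0 < s" "s < 1" "1 \<le> k"
  shows "0 < ginv k s"
proof -
  have "0 < ginv 1 s" using assms by simp
  also have "\<dots> \<le> ginv k s" using incseqD[OF incseq_ginv[OF assms(1,2)] assms(3)] .
  finally show ?thesis .
qed

lemma g_eq_inverse_ginv:
  assumes "0 < s" "s < 1"
  shows "g (Suc n) s = 1 / ginv (Suc n) s"
proof (induction n)
  case 0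
  then show ?case by simp
next
  case (Suc n)
  have pos: "0 < ginv (Suc n) s" by (rule ginv_pos[OF assms]) simp
  have "g (Suc (Suc n)) s
      = s * (1 / ginv (Suc n) s) / (1 - s + real (Suc (Suc n)) * (1 / ginv (Suc n) s))"
    using Suc by simp
  also have "\<dots> = s / ((1 - s) * ginv (Suc n) s + real (Suc (Suc n)))"
    using pos assms by (simp add: field_simps del: ginv.simps)
  also have "\<dots> = 1 / ginv (Suc (Suc n)) s"
    using assms by simp
  finally show ?case .
qed

definition log_term :: "real \<Rightarrow> (nat \<Rightarrow> real) \<Rightarrow> nat \<Rightarrow> real" where
  "log_term s y k = (if k = 1 then - s * y 1 else ((1 - s) * y (k - 1) - s * y k) / real k)"

lemma log_term_uminus: "log_term s (\<lambda>i. - y i) k = - log_term s y k"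
  by (simp add: log_term_def minus_divide_left)

lemma log_term_add_ginv:
  assumes "0 < s" "1 \<le> k"
  shows "log_term s (\<lambda>i. y i + c * ginv i s) k = log_term s y k - c"
proof (cases "k = 1")
  case True
  then show ?thesis using assms by (simp add: log_term_def algebra_simps)
next
  case False
  then obtain j where k: "k = Suc j" using assms(2) by (cases k) auto
  then have j: "k - 1 = j" by simp
  have "log_term s (\<lambda>i. y i + c * ginv i s) k
      = ((1 - s) * y j - s * y k + c * ((1 - s) * ginv j s - s * ginv k s)) / real k"
    using False j by (simp add: log_term_def algebra_simps del: ginv.simps)
  also have "(1 - s) * ginv j s - s * ginv k s = - real k"
    using assms(1) k by simp
  also have "((1 - s) * y j - s * y k + c * - real k) / real k = log_term s y k - c"
    using False j k by (simp add: log_term_def field_simps)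
  finally show ?thesis .
qed

lemma log_term_nonneg_imp_nonpos:
  assumes "0 < s" "s < 1" "\<forall>j\<in>{1..n}. 0 \<le> log_term s z j" "1 \<le> n"
  shows "z n \<le> 0"
  using assms(3,4)
proof (induction n)
  case 0
  then show ?case by simp
next
  case (Suc n)
  show ?case
  proof (cases "n = 0")
    case True
    then have "s * z 1 \<le> 0" using Suc.prems by (auto simp: log_term_def)
    then show ?thesis using True assms(1) by (simp add: mult_le_0_iff)
  next
    case False
    then have "z n \<le> 0" using Suc by auto
    moreover have "0 \<le> (1 - s) * z n - s * z (Suc n)"
      using bspec[OF Suc.prems(1), of "Suc n"] False
      by (simp add: log_term_def zero_le_divide_iff)
    moreover have "(1 - s) * z n \<le> 0"
      using \<open>z n \<le> 0\<close> assms(2) by (simp add: mult_nonneg_nonpos)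
    ultimately have "s * z (Suc n) \<le> 0" by linarith
    then show ?thesis using assms(1) by (simp add: mult_le_0_iff)
  qed
qed

lemma log_term_lower_bound:
  assumes "0 < s" "s < 1" "\<forall>j\<in>{1..n}. c \<le> log_term s y j" "1 \<le> n"
  shows "y n \<le> - c * ginv n s"
proof -
  have "\<forall>j\<in>{1..n}. 0 \<le> log_term s (\<lambda>i. y i + c * ginv i s) j"
    using assms(3) log_term_add_ginv[OF assms(1)] by simp
  from log_term_nonneg_imp_nonpos[OF assms(1,2) this assms(4)] show ?thesis by simp
qed

lemma log_term_upper_bound:
  assumes "0 < s" "s < 1" "\<forall>j\<in>{1..n}. log_term s y j \<le> c" "1 \<le> n"
  shows "- c * ginv n s \<le> y n"
proof -
  have "\<forall>j\<in>{1..n}. - c \<le> log_term s (\<lambda>i. - y i) j"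
    using assms(3) by (simp add: log_term_uminus)
  from log_term_lower_bound[OF assms(1,2) this assms(4)] show ?thesis by simp
qed

lemma admissible_ge_one:
  assumes "admissible d B \<alpha>" "1 \<le> j" "j \<le> d - 1"
  shows "1 \<le> \<alpha> j"
  using assms(2,3)
proof (induction j rule: dec_induct)
  case base
  then show ?case using assms(1) by (simp add: admissible_def)
next
  case (step j)
  then show ?case using assms(1) by (force simp: admissible_def)
qed

lemma
  assumes "admissible d B \<alpha>" "2 \<le> d" "0 < B" "k \<in> {1..d}"
  shows ln_mterm: "ln (mterm d B s \<alpha> k) = log_term s (\<lambda>j. ln ((\<alpha>(d := B)) j)) k"
    and mterm_pos: "0 < mterm d B s \<alpha> k"
proof -
  have pos: "0 < \<alpha> j" if "1 \<le> j" "j < d" for j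
    using admissible_ge_one[OF assms(1)] that by fastforce
  have "ln (mterm d B s \<alpha> k) = log_term s (\<lambda>j. ln ((\<alpha>(d := B)) j)) k
        \<and> 0 < mterm d B s \<alpha> k"
  proof (cases "k = 1")
    case True
    then show ?thesis using assms(2) pos[of 1] by (simp add: mterm_def log_term_def ln_powr)
  next
    case False
    then have "k - 1 \<noteq> d" "1 \<le> k - 1" "k - 1 < d" using assms(4) by auto
    then have a: "0 < \<alpha> (k - 1)" "(\<alpha>(d := B)) (k - 1) = \<alpha> (k - 1)" using pos by auto
    obtain b where b: "0 < b" "(\<alpha>(d := B)) k = b"
      "mterm d B s \<alpha> k = (\<alpha> (k - 1) powr (1 - s) * b powr (- s)) powr (1 / real k)"
    proof (cases "k = d")
      case True
      then show thesis using that[of B] False assms(3) by (simp add: mterm_def)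
    next
      case False
      then show thesis using that[of "\<alpha> k"] \<open>k \<noteq> 1\<close> pos[of k] assms(4) by (simp add: mterm_def)
    qed
    show ?thesis
      using False a b by (simp add: log_term_def ln_powr ln_mult field_simps del: fun_upd_apply)
  qed
  then show "ln (mterm d B s \<alpha> k) = log_term s (\<lambda>j. ln ((\<alpha>(d := B)) j)) k"
        and "0 < mterm d B s \<alpha> k" by auto
qed

lemma minval_le_mterm:
  assumes "k \<in> {1..d}"
  shows "minval d B s \<alpha> \<le> mterm d B s \<alpha> k"
  unfolding minval_def using assms by (intro Min_le) auto

lemma minval_pos:
  assumes "admissible d B \<alpha>" "2 \<le> d" "0 < B"
  shows "0 < minval d B s \<alpha>"
  unfolding minval_def using assms mterm_pos[OF assms] by (subst Min_gr_iff) auto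

lemma ln_minval_le_log_term:
  assumes "admissible d B \<alpha>" "2 \<le> d" "0 < B" "k \<in> {1..d}"
  shows "ln (minval d B s \<alpha>) \<le> log_term s (\<lambda>j. ln ((\<alpha>(d := B)) j)) k"
proof -
  have "ln (minval d B s \<alpha>) \<le> ln (mterm d B s \<alpha> k)"
    using minval_le_mterm[OF assms(4)] minval_pos[OF assms(1-3)] mterm_pos[OF assms]
    by (metis ln_le_cancel_iff)
  then show ?thesis by (simp only: ln_mterm[OF assms])
qed

lemma minval_le_bound:
  assumes "admissible d B \<alpha>" "2 \<le> d" "1 < B" "0 < s" "s < 1"
  shows "minval d B s \<alpha> \<le> B powr (- 1 / ginv d s)"
proof -
  define m where "m = minval d B s \<alpha>"
  have "\<forall>j\<in>{1..d}. ln m \<le> log_term s (\<lambda>j. ln ((\<alpha>(d := B)) j)) j"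
    using ln_minval_le_log_term[OF assms(1,2)] assms(3) unfolding m_def by simp
  from log_term_lower_bound[OF assms(4,5) this] assms(2)
  have "ln B \<le> - ln m * ginv d s" by simp
  then have "ln m \<le> ln (B powr (- 1 / ginv d s))"
    using ginv_pos[OF assms(4,5)] assms(2,3) by (simp add: ln_powr field_simps)
  moreover have "0 < m" "0 < B powr (- 1 / ginv d s)"
    using minval_pos[OF assms(1,2)] assms(3) unfolding m_def by simp_all
  ultimately show ?thesis unfolding m_def by (metis ln_le_cancel_iff)
qed

lemma bound_le_minval_if_balanced:
  assumes "admissible d B \<alpha>" "2 \<le> d" "1 < B" "0 < s" "s < 1"
    and "\<forall>k\<in>{1..d}. mterm d B s \<alpha> k = minval d B s \<alpha>"
  shows "B powr (- 1 / ginv d s) \<le> minval d B s \<alpha>"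
proof -
  define m where "m = minval d B s \<alpha>"
  have "\<forall>j\<in>{1..d}. log_term s (\<lambda>j. ln ((\<alpha>(d := B)) j)) j \<le> ln m"
  proof
    fix j assume j: "j \<in> {1..d}"
    have "ln (mterm d B s \<alpha> j) = ln m" using assms(6) j unfolding m_def by simp
    then show "log_term s (\<lambda>j. ln ((\<alpha>(d := B)) j)) j \<le> ln m"
      using ln_mterm[OF assms(1,2) _ j] assms(3) by simp
  qed
  from log_term_upper_bound[OF assms(4,5) this] assms(2)
  have "- ln m * ginv d s \<le> ln B" by simp
  then have "ln (B powr (- 1 / ginv d s)) \<le> ln m"
    using ginv_pos[OF assms(4,5)] assms(2,3) by (simp add: ln_powr field_simps)
  moreover have "0 < m" "0 < B powr (- 1 / ginv d s)"
    using minval_pos[OF assms(1,2)] assms(3) unfolding m_def by simp_all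
  ultimately show ?thesis unfolding m_def by (metis ln_le_cancel_iff)
qed

definition balanced_point :: "nat \<Rightarrow> real \<Rightarrow> real \<Rightarrow> nat \<Rightarrow> real" where
  "balanced_point d B s k = B powr (ginv k s / ginv d s)"

lemma admissible_balanced_point:
  assumes "2 \<le> d" "1 < B" "0 < s" "s < 1"
  shows "admissible d B (balanced_point d B s)"
proof -
  have A: "0 < ginv d s" using ginv_pos[OF assms(3,4)] assms(1) by simp
  have mono: "balanced_point d B s i \<le> balanced_point d B s j" if "i \<le> j" for i j
    unfolding balanced_point_def using incseqD[OF incseq_ginv[OF assms(3,4)] that] A assms(2)
    by (intro powr_mono divide_right_mono) auto
  have "balanced_point d B s d = B"
    using A assms(2) by (simp add: balanced_point_def)
  moreover have "1 \<le> balanced_point d B s 1"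
    unfolding balanced_point_def using A assms(2-4) by (intro ge_one_powr_ge_zero) auto
  ultimately show ?thesis
    using mono[of "d - 1" d] mono[of _ "Suc _"] unfolding admissible_def by auto
qed

lemma mterm_balanced_point:
  assumes "2 \<le> d" "1 < B" "0 < s" "s < 1" "k \<in> {1..d}"
  shows "mterm d B s (balanced_point d B s) k = B powr (- 1 / ginv d s)"
proof -
  define c where "c = ln B / ginv d s"
  have A: "0 < ginv d s" using ginv_pos[OF assms(3,4)] assms(1) by simp
  have upd: "(balanced_point d B s)(d := B) = balanced_point d B s"
    using A assms(2) by (auto simp: balanced_point_def)
  have "(\<lambda>j. ln (balanced_point d B s j)) = (\<lambda>j. 0 + c * ginv j s)"
    using assms(2) by (auto simp: balanced_point_def c_def ln_powr)
  then have "ln (mterm d B s (balanced_point d B s) k) = log_term s (\<lambda>j. 0 + c * ginv j s) k"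
    using ln_mterm[OF admissible_balanced_point[OF assms(1-4)] assms(1) _ assms(5)] assms(2)
    by (simp add: upd)
  also have "\<dots> = log_term s (\<lambda>_. 0) k - c"
    using assms(3,5) by (intro log_term_add_ginv) auto
  also have "\<dots> = ln (B powr (- 1 / ginv d s))"
    using assms(2) by (simp add: log_term_def c_def ln_powr)
  finally have "ln (mterm d B s (balanced_point d B s) k) = ln (B powr (- 1 / ginv d s))" .
  moreover have "0 < mterm d B s (balanced_point d B s) k"
    using mterm_pos[OF admissible_balanced_point[OF assms(1-4)] assms(1) _ assms(5)] assms(2)
    by simp
  moreover have "0 < B powr (- 1 / ginv d s)" using assms(2) by simp
  ultimately show ?thesis by (metis ln_inj_iff)
qed

lemma minval_balanced_point:
  assumes "2 \<le> d" "1 < B" "0 < s" "s < 1"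
  shows "minval d B s (balanced_point d B s) = B powr (- 1 / ginv d s)"
proof -
  have "(\<lambda>k. mterm d B s (balanced_point d B s) k) ` {1..d} = {B powr (- 1 / ginv d s)}"
    using mterm_balanced_point[OF assms] assms(1) by force
  then show ?thesis by (simp add: minval_def)
qed

theorem proposition2p8:
  fixes d :: nat and B s :: real
  assumes "d \<ge> 2" and "B > 1" and "0 < s" and "s < 1"
  shows "(SUP \<alpha>\<in>{\<alpha>. admissible d B \<alpha>}. minval d B s \<alpha>) = B powr (- g d s)
       \<and> (\<exists>\<alpha>. admissible d B \<alpha> \<and> (\<forall>k\<in>{1..d}. mterm d B s \<alpha> k = minval d B s \<alpha>))
       \<and> (\<forall>\<alpha>. admissible d B \<alpha> \<and> (\<forall>k\<in>{1..d}. mterm d B s \<alpha> k = minval d B s \<alpha>)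
              \<longrightarrow> minval d B s \<alpha> = B powr (- g d s))"
proof -
  have g_d: "- g d s = - 1 / ginv d s"
    using g_eq_inverse_ginv[OF assms(3,4), of "d - 1"] assms(1) by (simp add: Suc_diff_1)
  let ?\<beta> = "balanced_point d B s"
  have "(SUP \<alpha>\<in>{\<alpha>. admissible d B \<alpha>}. minval d B s \<alpha>) = B powr (- 1 / ginv d s)"
    using admissible_balanced_point[OF assms] minval_balanced_point[OF assms]
      minval_le_bound[OF _ assms]
    by (intro cSup_eq_maximum) (auto intro: rev_image_eqI[of ?\<beta>])
  moreover have "\<forall>k\<in>{1..d}. mterm d B s ?\<beta> k = minval d B s ?\<beta>"
    using mterm_balanced_point[OF assms] minval_balanced_point[OF assms] by simp
  moreover have "minval d B s \<alpha> = B powr (- 1 / ginv d s)"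
    if "admissible d B \<alpha>" "\<forall>k\<in>{1..d}. mterm d B s \<alpha> k = minval d B s \<alpha>" for \<alpha>
    using minval_le_bound[OF that(1) assms] bound_le_minval_if_balanced[OF that(1) assms that(2)]
    by simp
  ultimately show ?thesis
    using admissible_balanced_point[OF assms] unfolding g_d by blast
qed

end
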